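(* The maximum achievable average rate of the optimal buffer-aided selection rule is $$\bar R_{SD}=\sum_{k=1}^M\int_0^\infty\log_2(1+x)\,f^*_{\Gamma_{kD}}(x)\,dx,$$ where $f^*_{\Gamma_{kD}}$ is $f_{\Gamma_{kD}}$ evaluated at $\mu_k=\mu_k^*$ for all $k$. If all $2M$ links are i.i.d. with common PDF $f_\gamma$ and CDF $F_\gamma$, this simplifies to $$\bar R_{SD}=M\int_0^\infty\log_2(1+x)\,f_\gamma(x)\,\big(F_\gamma(x)\big)^{2M-1}dx.$$
   Context: Network of a source, $M$ half-duplex buffer-aided relays and a destination. In each time slot the $2M$ SNRs $\gamma_{Sk}$ (source to relay $k$) and $\gamma_{kD}$ (relay $k$ to destination) are mutually independent nonnegative random variables with PDFs $f_{\gamma_\alpha}$ and CDFs $F_{\gamma_\alpha}$, stationary/ergodic across slots. For constants $\mu_1,\dots,\mu_M\in(0,1)$ and $x>0$, $$f_{\Gamma_{kD}}(x)=f_{\gamma_{kD}}(x)F_{\gamma_{Sk}}\!\big((1+x)^{\frac{1-\mu_k}{\mu_k}}-1\big)\prod_{j\ne k}F_{\gamma_{Sj}}\!\big((1+x)^{\frac{1-\mu_k}{\mu_j}}-1\big)F_{\gamma_{jD}}\!\big((1+x)^{\frac{1-\mu_k}{1-\mu_j}}-1\big),$$ and analogously $f_{\Gamma_{Sk}}(x)=f_{\gamma_{Sk}}(x)F_{\gamma_{kD}}((1+x)^{\frac{\mu_k}{1-\mu_k}}-1)\prod_{j\ne k}F_{\gamma_{Sj}}((1+x)^{\frac{\mu_k}{\mu_j}}-1)F_{\gamma_{jD}}((1+x)^{\frac{\mu_k}{1-\mu_j}}-1)$.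 The optimal constants $\mu_k^*$ are a solution of $\int_0^\infty\log_2(1+x)f_{\Gamma_{Sk}}(x)dx=\int_0^\infty\log_2(1+x)f_{\Gamma_{kD}}(x)dx$ for $k=1,\dots,M$ (and $\mu_k^*=1/2$ in the i.i.d. case). The optimal rule selects, in each slot, relay $k$ to receive iff $\mu_k^*\log_2(1+\gamma_{Sk})$, or to transmit iff $(1-\mu_k^* )\log_2(1+\gamma_{kD})$, is the largest of the $2M$ quantities $\mu_j^*\log_2(1+\gamma_{Sj}),(1-\mu_j^* )\log_2(1+\gamma_{jD})$. *)

theory Defs
  imports "HOL-Probability.Probability"
begin

definition rv_cdf :: "'a measure \<Rightarrow> ('a \<Rightarrow> real) \<Rightarrow> real \<Rightarrow> real" where
  "rv_cdf M X x = measure M {\<omega> \<in> space M. X \<omega> \<le> x}"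

text \<open>The density f_{Gamma_kD} (relays indexed 0..m-1). fS, fD: PDFs; FS, FD: CDFs;
  mu: the constants mu_k.\<close>
definition f_GammaD ::
  "nat \<Rightarrow> (nat \<Rightarrow> real \<Rightarrow> real) \<Rightarrow> (nat \<Rightarrow> real \<Rightarrow> real) \<Rightarrow>
   (nat \<Rightarrow> real \<Rightarrow> real) \<Rightarrow> (nat \<Rightarrow> real \<Rightarrow> real) \<Rightarrow> (nat \<Rightarrow> real) \<Rightarrow> nat \<Rightarrow> real \<Rightarrow> real" where
  "f_GammaD m fS FS fD FD mu k x =
     fD k x * FS k ((1 + x) powr ((1 - mu k) / mu k) - 1) *
     (\<Prod>j\<in>{..<m} - {k}. FS j ((1 + x) powr ((1 - mu k) / mu j) - 1) *
                          FD j ((1 + x) powr ((1 - mu k) / (1 - mu j)) - 1))"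

definition f_GammaS ::
  "nat \<Rightarrow> (nat \<Rightarrow> real \<Rightarrow> real) \<Rightarrow> (nat \<Rightarrow> real \<Rightarrow> real) \<Rightarrow>
   (nat \<Rightarrow> real \<Rightarrow> real) \<Rightarrow> (nat \<Rightarrow> real \<Rightarrow> real) \<Rightarrow> (nat \<Rightarrow> real) \<Rightarrow> nat \<Rightarrow> real \<Rightarrow> real" where
  "f_GammaS m fS FS fD FD mu k x =
     fS k x * FD k ((1 + x) powr (mu k / (1 - mu k)) - 1) *
     (\<Prod>j\<in>{..<m} - {k}. FS j ((1 + x) powr (mu k / mu j) - 1) *
                          FD j ((1 + x) powr (mu k / (1 - mu j)) - 1))"

definition selected_tx ::
  "nat \<Rightarrow> (nat \<Rightarrow> 'a \<Rightarrow> real) \<Rightarrow> (nat \<Rightarrow> 'a \<Rightarrow> real) \<Rightarrow> (nat \<Rightarrow> real) \<Rightarrow> nat \<Rightarrow> 'a \<Rightarrow> bool" where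
  "selected_tx m gS gD mu k w \<longleftrightarrow>
     (\<forall>j<m. (1 - mu k) * log 2 (1 + gD k w) > mu j * log 2 (1 + gS j w)) \<and>
     (\<forall>j<m. j \<noteq> k \<longrightarrow> (1 - mu k) * log 2 (1 + gD k w) > (1 - mu j) * log 2 (1 + gD j w))"

definition avg_rate_SD ::
  "'a measure \<Rightarrow> nat \<Rightarrow> (nat \<Rightarrow> 'a \<Rightarrow> real) \<Rightarrow> (nat \<Rightarrow> 'a \<Rightarrow> real) \<Rightarrow> (nat \<Rightarrow> real) \<Rightarrow> real" where
  "avg_rate_SD M m gS gD mu =
     (\<Sum>k<m. \<integral>w. (if selected_tx m gS gD mu k w then log 2 (1 + gD k w) else 0) \<partial>M)"

end

theory Submission
  imports Defs
begin

(* Relay k transmits exactly when the SNR of every competing link lies below a threshold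
   determined by x = gD k (the link beats relay k iff its weighted rate is larger).
   Conditioning on gD k = x, independence turns the probability of this event into the
   product of the competitors' CDFs at their thresholds; as all SNRs have densities, strict
   and non-strict comparisons agree.  In the i.i.d. case with
   mu_k = 1/2 every threshold equals x, and the product collapses to F(x)^(2M-1). *)

lemma integral_eq_if_nn_integral_eq:
  fixes f :: "'a \<Rightarrow> real" and g :: "'b \<Rightarrow> real"
  assumes "f \<in> borel_measurable M" "g \<in> borel_measurable N"
    and "AE x in M. 0 \<le> f x" "AE x in N. 0 \<le> g x"
    and "(\<integral>\<^sup>+x. ennreal (f x) \<partial>M) = (\<integral>\<^sup>+x. ennreal (g x) \<partial>N)"
  shows "integral\<^sup>L M f = integral\<^sup>L N g"
  using assms by (simp add: integral_eq_nn_integral)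

lemma rv_cdf_nonneg: "0 \<le> rv_cdf M X x"
  by (simp add: rv_cdf_def)

lemma (in finite_measure) borel_measurable_emeasure_less:
  fixes X :: "'a \<Rightarrow> real" and \<theta> :: "real \<Rightarrow> real"
  assumes "X \<in> borel_measurable M" and "\<theta> \<in> borel_measurable borel"
  shows "(\<lambda>z. emeasure M {\<omega>\<in>space M. X \<omega> < \<theta> z}) \<in> borel_measurable borel"
proof -
  have "mono (\<lambda>c. measure M {\<omega>\<in>space M. X \<omega> < c})"
    using assms(1) by (auto simp: mono_def intro!: finite_measure_mono)
  from measurable_compose[OF assms(2) borel_measurable_mono[OF this]] show ?thesis
    by (simp add: emeasure_eq_measure)
qed

lemma (in finite_measure) borel_measurable_rv_cdf:
  assumes "X \<in> borel_measurable M"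
  shows "rv_cdf M X \<in> borel_measurable borel"
  using assms unfolding rv_cdf_def
  by (intro borel_measurable_mono) (auto simp: mono_def intro!: finite_measure_mono)

lemma borel_measurable_PiM_below_thresholds:
  fixes g :: "real \<Rightarrow> ennreal" and \<theta> :: "'i \<Rightarrow> real \<Rightarrow> real"
  assumes "i0 \<in> I" and "J \<subseteq> I" and [measurable]: "g \<in> borel_measurable borel"
    and \<theta>_meas: "\<And>i. i \<in> J \<Longrightarrow> \<theta> i \<in> borel_measurable borel"
  shows "(\<lambda>y. g (y i0) * (\<Prod>i\<in>J. indicator {..<\<theta> i (y i0)} (y i)))
           \<in> borel_measurable (Pi\<^sub>M I (\<lambda>_. borel))"
proof (intro borel_measurable_times_ennreal borel_measurable_prod_ennreal)
  note [measurable] = \<open>i0 \<in> I\<close>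
  fix i assume "i \<in> J"
  then have [measurable]: "i \<in> I" "\<theta> i \<in> borel_measurable borel" using assms(2) \<theta>_meas by auto
  show "(\<lambda>y. indicator {..<\<theta> i (y i0)} (y i) :: ennreal) \<in> borel_measurable (Pi\<^sub>M I (\<lambda>_. borel))"
    unfolding indicator_def lessThan_iff by measurable
qed (use assms(1) in measurable)

lemma nn_integral_PiM_insert_below_thresholds:
  fixes N :: "'i \<Rightarrow> real measure" and g :: "real \<Rightarrow> ennreal" and \<theta> :: "'i \<Rightarrow> real \<Rightarrow> real"
  assumes "product_sigma_finite N" and sets_N: "\<And>i. sets (N i) = sets borel"
    and J: "finite J" "i0 \<notin> J"
    and "g \<in> borel_measurable borel" and "\<And>i. i \<in> J \<Longrightarrow> \<theta> i \<in> borel_measurable borel"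
  shows "(\<integral>\<^sup>+y. g (y i0) * (\<Prod>i\<in>J. indicator {..<\<theta> i (y i0)} (y i)) \<partial>Pi\<^sub>M (insert i0 J) N) =
         (\<integral>\<^sup>+z. g z * (\<Prod>i\<in>J. emeasure (N i) {..<\<theta> i z}) \<partial>N i0)"
proof -
  interpret product_sigma_finite N by fact
  have "sets (Pi\<^sub>M (insert i0 J) N) = sets (Pi\<^sub>M (insert i0 J) (\<lambda>_. borel))"
    by (rule sets_PiM_cong) (simp_all add: sets_N)
  with borel_measurable_PiM_below_thresholds[of i0 "insert i0 J" J g \<theta>] assms(5,6)
  have meas: "(\<lambda>y. g (y i0) * (\<Prod>i\<in>J. indicator {..<\<theta> i (y i0)} (y i)))
                \<in> borel_measurable (Pi\<^sub>M (insert i0 J) N)"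
    using measurable_cong_sets by blast
  have "(\<integral>\<^sup>+y. g (y i0) * (\<Prod>i\<in>J. indicator {..<\<theta> i (y i0)} (y i)) \<partial>Pi\<^sub>M (insert i0 J) N) =
        (\<integral>\<^sup>+z. (\<integral>\<^sup>+y. g z * (\<Prod>i\<in>J. indicator {..<\<theta> i z} (y i)) \<partial>Pi\<^sub>M J N) \<partial>N i0)"
    using J meas by (subst product_nn_integral_insert_rev)
                    (auto intro!: nn_integral_cong arg_cong[where f="(*) _"] prod.cong)
  also have "\<dots> = (\<integral>\<^sup>+z. g z * (\<Prod>i\<in>J. emeasure (N i) {..<\<theta> i z}) \<partial>N i0)"
  proof (rule nn_integral_cong)
    fix z
    have ind_meas: "(indicator {..<\<theta> i z} :: real \<Rightarrow> ennreal) \<in> borel_measurable (N i)" for i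
      by (rule borel_measurable_indicator) (simp add: sets_N)
    have "(\<lambda>y. \<Prod>i\<in>J. indicator {..<\<theta> i z} (y i) :: ennreal) \<in> borel_measurable (Pi\<^sub>M J N)"
    proof (rule borel_measurable_prod_ennreal)
      fix i assume "i \<in> J"
      show "(\<lambda>y. indicator {..<\<theta> i z} (y i) :: ennreal) \<in> borel_measurable (Pi\<^sub>M J N)"
        by (rule measurable_compose[OF measurable_component_singleton[OF \<open>i \<in> J\<close>] ind_meas])
    qed
    then show "(\<integral>\<^sup>+y. g z * (\<Prod>i\<in>J. indicator {..<\<theta> i z} (y i)) \<partial>Pi\<^sub>M J N) =
               g z * (\<Prod>i\<in>J. emeasure (N i) {..<\<theta> i z})"
      using J(1) ind_meas
      by (simp add: nn_integral_cmult, subst product_nn_integral_prod) (auto simp: sets_N)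
  qed
  finally show ?thesis .
qed

lemma (in prob_space) nn_integral_indep_vars_below_thresholds:
  fixes X :: "'i \<Rightarrow> 'a \<Rightarrow> real" and g :: "real \<Rightarrow> ennreal" and \<theta> :: "'i \<Rightarrow> real \<Rightarrow> real"
  assumes fin: "finite I" and i0: "i0 \<in> I" and indep: "indep_vars (\<lambda>_. borel) X I"
    and g_meas: "g \<in> borel_measurable borel"
    and \<theta>_meas: "\<And>i. i \<in> I \<Longrightarrow> \<theta> i \<in> borel_measurable borel"
  shows "(\<integral>\<^sup>+\<omega>. g (X i0 \<omega>) * (\<Prod>i\<in>I - {i0}. indicator {..<\<theta> i (X i0 \<omega>)} (X i \<omega>)) \<partial>M) =
         (\<integral>\<^sup>+\<omega>. g (X i0 \<omega>) *
              (\<Prod>i\<in>I - {i0}. emeasure M {\<omega>'\<in>space M. X i \<omega>' < \<theta> i (X i0 \<omega>)}) \<partial>M)"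
proof -
  define J where "J = I - {i0}"
  have I: "I = insert i0 J" "i0 \<notin> J" "finite J" using i0 fin by (auto simp: J_def)
  have X_meas: "X i \<in> borel_measurable M" if "i \<in> I" for i
    using indep that unfolding indep_vars_def by blast
  \<comment> \<open>The product-measure results below need every coordinate to be a random variable.\<close>
  define Y where "Y i = (if i \<in> I then X i else (\<lambda>_. 0))" for i
  have Y_meas [measurable]: "Y i \<in> borel_measurable M" for i
    using X_meas by (simp add: Y_def)
  have Y_eq: "Y i = X i" if "i \<in> I" for i
    using that by (simp add: Y_def)
  have indep_Y: "indep_vars (\<lambda>_. borel) Y I"
    using indep by (rule indep_vars_cong[THEN iffD1, rotated 3]) (auto simp: Y_def)
  have distr_Y:
    "distr M (Pi\<^sub>M I (\<lambda>_. borel)) (\<lambda>\<omega>. \<lambda>i\<in>I. Y i \<omega>) = (\<Pi>\<^sub>M i\<in>I. distr M borel (Y i))"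
    using indep_vars_iff_distr_eq_PiM[THEN iffD1, OF _ _ indep_Y] i0 by auto
  have N: "product_sigma_finite (\<lambda>i. distr M borel (Y i))"
    by (auto simp: product_sigma_finite_def intro!: prob_space_imp_sigma_finite prob_space_distr)
  have Y_less: "emeasure (distr M borel (Y i)) {..<c} = emeasure M {\<omega>\<in>space M. X i \<omega> < c}"
    if "i \<in> I" for i c
    using that X_meas
    by (subst emeasure_distr) (auto simp: Y_eq intro!: arg_cong[where f="emeasure M"])
  have less_meas:
    "(\<lambda>z. g z * (\<Prod>i\<in>J. emeasure M {\<omega>\<in>space M. X i \<omega> < \<theta> i z})) \<in> borel_measurable borel"
    using I(1) g_meas \<theta>_meas X_meas
    by (intro borel_measurable_times_ennreal borel_measurable_prod_ennreal
              borel_measurable_emeasure_less) auto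
  have "(\<integral>\<^sup>+\<omega>. g (X i0 \<omega>) * (\<Prod>i\<in>I - {i0}. indicator {..<\<theta> i (X i0 \<omega>)} (X i \<omega>)) \<partial>M)
      = (\<integral>\<^sup>+y. g (y i0) * (\<Prod>i\<in>J. indicator {..<\<theta> i (y i0)} (y i))
           \<partial>distr M (Pi\<^sub>M I (\<lambda>_. borel)) (\<lambda>\<omega>. \<lambda>i\<in>I. Y i \<omega>))"
    using i0 g_meas \<theta>_meas
    by (subst nn_integral_distr) (auto simp: J_def Y_eq intro!: borel_measurable_PiM_below_thresholds)
  also have "\<dots> = (\<integral>\<^sup>+z. g z * (\<Prod>i\<in>J. emeasure (distr M borel (Y i)) {..<\<theta> i z})
                     \<partial>distr M borel (Y i0))"
    unfolding distr_Y unfolding I(1) using N I(2,3) g_meas \<theta>_meas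
    by (intro nn_integral_PiM_insert_below_thresholds) (auto simp: I(1))
  also have "\<dots> = (\<integral>\<^sup>+z. g z * (\<Prod>i\<in>J. emeasure M {\<omega>\<in>space M. X i \<omega> < \<theta> i z})
                     \<partial>distr M borel (Y i0))"
    by (intro nn_integral_cong arg_cong[where f="(*) _"] prod.cong refl) (simp add: Y_less J_def)
  also have "\<dots> = (\<integral>\<^sup>+\<omega>. g (X i0 \<omega>) *
                       (\<Prod>i\<in>I - {i0}. emeasure M {\<omega>'\<in>space M. X i \<omega>' < \<theta> i (X i0 \<omega>)}) \<partial>M)"
    using less_meas i0 X_meas by (subst nn_integral_distr) (simp_all add: J_def Y_eq)
  finally show ?thesis .
qed

lemma (in prob_space) emeasure_less_eq_rv_cdf:
  fixes X :: "'a \<Rightarrow> real"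
  assumes "distributed M lborel X f"
  shows "emeasure M {\<omega>\<in>space M. X \<omega> < c} = ennreal (rv_cdf M X c)"
proof -
  have X_meas [measurable]: "X \<in> borel_measurable M"
    using distributed_measurable[OF assms] by simp
  have "emeasure M {\<omega>\<in>space M. X \<omega> = c} = (\<integral>\<^sup>+x. f x * indicator {c} x \<partial>lborel)"
    using distributed_emeasure[OF assms, of "{c}"] by (simp add: vimage_def Int_def conj_commute)
  also have "\<dots> = 0"
    by (rule nn_integral_null_set) (simp add: null_sets_def)
  moreover have "{\<omega>\<in>space M. X \<omega> \<le> c} = {\<omega>\<in>space M. X \<omega> < c} \<union> {\<omega>\<in>space M. X \<omega> = c}"
    by auto
  moreover have "{\<omega>\<in>space M. X \<omega> < c} \<inter> {\<omega>\<in>space M. X \<omega> = c} = {}"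
    by auto
  ultimately have "emeasure M {\<omega>\<in>space M. X \<omega> \<le> c} = emeasure M {\<omega>\<in>space M. X \<omega> < c}"
    using plus_emeasure[of "{\<omega>\<in>space M. X \<omega> < c}" M "{\<omega>\<in>space M. X \<omega> = c}"] by simp
  then show ?thesis
    by (simp add: rv_cdf_def emeasure_eq_measure)
qed

lemma (in prob_space) integral_indep_vars_below_thresholds:
  fixes X :: "'i \<Rightarrow> 'a \<Rightarrow> real" and h :: "real \<Rightarrow> real" and \<theta> :: "'i \<Rightarrow> real \<Rightarrow> real"
  assumes fin: "finite I" and i0: "i0 \<in> I" and indep: "indep_vars (\<lambda>_. borel) X I"
    and dens: "\<And>i. i \<in> I \<Longrightarrow> distributed M lborel (X i) (f i)"
    and h_meas: "h \<in> borel_measurable borel" and h_nonneg: "\<And>x. 0 \<le> h x"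
    and \<theta>_meas: "\<And>i. i \<in> I \<Longrightarrow> \<theta> i \<in> borel_measurable borel"
  shows "(\<integral>\<omega>. h (X i0 \<omega>) * (\<Prod>i\<in>I - {i0}. indicator {..<\<theta> i (X i0 \<omega>)} (X i \<omega>)) \<partial>M) =
         (\<integral>\<omega>. h (X i0 \<omega>) * (\<Prod>i\<in>I - {i0}. rv_cdf M (X i) (\<theta> i (X i0 \<omega>))) \<partial>M)"
proof (rule integral_eq_if_nn_integral_eq)
  have X_meas [measurable]: "X i \<in> borel_measurable M" if "i \<in> I" for i
    using indep that unfolding indep_vars_def by blast
  have "(\<integral>\<^sup>+\<omega>. ennreal (h (X i0 \<omega>) * (\<Prod>i\<in>I - {i0}. indicator {..<\<theta> i (X i0 \<omega>)} (X i \<omega>))) \<partial>M) =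
        (\<integral>\<^sup>+\<omega>. ennreal (h (X i0 \<omega>)) * (\<Prod>i\<in>I - {i0}. indicator {..<\<theta> i (X i0 \<omega>)} (X i \<omega>)) \<partial>M)"
    using h_nonneg by (intro nn_integral_cong) (simp add: ennreal_mult' prod_ennreal[symmetric] ennreal_indicator)
  also have "\<dots> = (\<integral>\<^sup>+\<omega>. ennreal (h (X i0 \<omega>)) *
                       (\<Prod>i\<in>I - {i0}. emeasure M {\<omega>'\<in>space M. X i \<omega>' < \<theta> i (X i0 \<omega>)}) \<partial>M)"
    using fin i0 indep h_meas \<theta>_meas by (intro nn_integral_indep_vars_below_thresholds) auto
  also have "\<dots> = (\<integral>\<^sup>+\<omega>. ennreal (h (X i0 \<omega>) *
                       (\<Prod>i\<in>I - {i0}. rv_cdf M (X i) (\<theta> i (X i0 \<omega>)))) \<partial>M)"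
  proof (intro nn_integral_cong)
    fix \<omega>
    have "(\<Prod>i\<in>I - {i0}. emeasure M {\<omega>'\<in>space M. X i \<omega>' < \<theta> i (X i0 \<omega>)}) =
          (\<Prod>i\<in>I - {i0}. ennreal (rv_cdf M (X i) (\<theta> i (X i0 \<omega>))))"
      by (intro prod.cong refl emeasure_less_eq_rv_cdf[OF dens]) simp
    also have "\<dots> = ennreal (\<Prod>i\<in>I - {i0}. rv_cdf M (X i) (\<theta> i (X i0 \<omega>)))"
      by (rule prod_ennreal) (rule rv_cdf_nonneg)
    finally show "ennreal (h (X i0 \<omega>)) *
                    (\<Prod>i\<in>I - {i0}. emeasure M {\<omega>'\<in>space M. X i \<omega>' < \<theta> i (X i0 \<omega>)}) =
                  ennreal (h (X i0 \<omega>) * (\<Prod>i\<in>I - {i0}. rv_cdf M (X i) (\<theta> i (X i0 \<omega>))))"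
      using h_nonneg by (simp add: ennreal_mult')
  qed
  finally show "(\<integral>\<^sup>+\<omega>. ennreal (h (X i0 \<omega>) * (\<Prod>i\<in>I - {i0}. indicator {..<\<theta> i (X i0 \<omega>)} (X i \<omega>))) \<partial>M) =
                (\<integral>\<^sup>+\<omega>. ennreal (h (X i0 \<omega>) * (\<Prod>i\<in>I - {i0}. rv_cdf M (X i) (\<theta> i (X i0 \<omega>)))) \<partial>M)" .
  show "(\<lambda>\<omega>. h (X i0 \<omega>) * (\<Prod>i\<in>I - {i0}. indicator {..<\<theta> i (X i0 \<omega>)} (X i \<omega>))) \<in> borel_measurable M"
    using i0 h_meas \<theta>_meas
    by (intro borel_measurable_times borel_measurable_prod measurable_compose[OF X_meas]) (auto simp: indicator_def)
  show "(\<lambda>\<omega>. h (X i0 \<omega>) * (\<Prod>i\<in>I - {i0}. rv_cdf M (X i) (\<theta> i (X i0 \<omega>)))) \<in> borel_measurable M"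
    using i0 h_meas \<theta>_meas
    by (intro borel_measurable_times borel_measurable_prod measurable_compose[OF X_meas]
              measurable_compose[OF _ borel_measurable_rv_cdf]) auto
qed (auto intro!: mult_nonneg_nonneg prod_nonneg h_nonneg rv_cdf_nonneg)

lemma mult_log_less_mult_log_iff:
  fixes a b s t :: real
  assumes "1 < B" "0 < a" "0 < 1 + s" "0 < 1 + t"
  shows "a * log B (1 + s) < b * log B (1 + t) \<longleftrightarrow> s < (1 + t) powr (b / a) - 1"
proof -
  have "a * log B (1 + s) < b * log B (1 + t) \<longleftrightarrow> log B (1 + s) < (b / a) * log B (1 + t)"
    using assms(2) by (simp add: field_simps)
  also have "(b / a) * log B (1 + t) = log B ((1 + t) powr (b / a))"
    using assms(4) by (simp add: log_powr)
  also have "log B (1 + s) < log B ((1 + t) powr (b / a)) \<longleftrightarrow> 1 + s < (1 + t) powr (b / a)"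
    using assms by (intro log_less_cancel_iff) auto
  finally show ?thesis by linarith
qed

(* Links are indexed by Inl j (source to relay j) and Inr j (relay j to destination); link i
   with SNR s beats the transmission of relay k at SNR x iff s exceeds this threshold. *)
definition selection_threshold :: "(nat \<Rightarrow> real) \<Rightarrow> nat \<Rightarrow> nat + nat \<Rightarrow> real \<Rightarrow> real" where
  "selection_threshold mu k i x = (1 + x) powr ((1 - mu k) / case_sum mu (\<lambda>j. 1 - mu j) i) - 1"

lemma selected_tx_iff_below_thresholds:
  assumes k: "k < m" and mu: "\<And>j. j < m \<Longrightarrow> 0 < mu j \<and> mu j < 1"
    and gS: "\<And>j. j < m \<Longrightarrow> 0 \<le> gS j w" and gD: "\<And>j. j < m \<Longrightarrow> 0 \<le> gD j w"
  shows "selected_tx m gS gD mu k w \<longleftrightarrow>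
         (\<forall>i\<in>({..<m} <+> {..<m}) - {Inr k}. case_sum gS gD i w < selection_threshold mu k i (gD k w))"
proof -
  have "a * log 2 (1 + s) < (1 - mu k) * log 2 (1 + gD k w) \<longleftrightarrow> s < (1 + gD k w) powr ((1 - mu k) / a) - 1"
    if "0 < a" "0 \<le> s" for a s
    using that gD[OF k] by (intro mult_log_less_mult_log_iff) auto
  moreover have "({..<m} <+> {..<m}) - {Inr k} = Inl ` {..<m} \<union> Inr ` ({..<m} - {k})"
    by auto
  ultimately show ?thesis
    using mu gS gD unfolding selected_tx_def selection_threshold_def
    by (auto simp: ball_Un mult.commute[of "1 - mu k"])
qed

lemma f_GammaD_eq_prod_thresholds:
  assumes "k < m"
  shows "f_GammaD m fS FS fD FD mu k x =
         fD k x * (\<Prod>i\<in>({..<m} <+> {..<m}) - {Inr k}. case_sum FS FD i (selection_threshold mu k i x))"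
proof -
  have "({..<m} <+> {..<m}) - {Inr k} = {..<m} <+> ({..<m} - {k})"
    by auto
  moreover have "prod P {..<m} = P k * prod P ({..<m} - {k})" for P :: "nat \<Rightarrow> real"
    using assms by (simp add: prod.remove)
  ultimately show ?thesis
    by (simp add: f_GammaD_def selection_threshold_def prod.Plus prod.distrib comp_def mult_ac)
qed

lemma selected_tx_rate_eq_prod_indicator:
  assumes k: "k < m" and mu: "\<And>j. j < m \<Longrightarrow> 0 < mu j \<and> mu j < 1"
    and gS: "\<And>j. j < m \<Longrightarrow> 0 \<le> gS j w" and gD: "\<And>j. j < m \<Longrightarrow> 0 \<le> gD j w"
  shows "(if selected_tx m gS gD mu k w then log 2 (1 + gD k w) else 0) =
         indicator {0..} (gD k w) * log 2 (1 + gD k w) *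
         (\<Prod>i\<in>({..<m} <+> {..<m}) - {Inr k}.
            indicator {..<selection_threshold mu k i (gD k w)} (case_sum gS gD i w))"
  using selected_tx_iff_below_thresholds[of k m mu gS w gD, OF k mu gS gD] gD[OF k]
  by (auto simp: indicator_def prod_zero_iff)

lemma (in prob_space) integral_selected_tx:
  fixes gS gD :: "nat \<Rightarrow> 'a \<Rightarrow> real" and fS fD :: "nat \<Rightarrow> real \<Rightarrow> real"
  assumes indep: "indep_vars (\<lambda>_. borel) (case_sum gS gD) ({..<m} <+> {..<m})"
    and distS: "\<And>j. j < m \<Longrightarrow> distributed M lborel (gS j) (\<lambda>x. ennreal (fS j x))"
    and distD: "\<And>j. j < m \<Longrightarrow> distributed M lborel (gD j) (\<lambda>x. ennreal (fD j x))"
    and fD_nonneg: "\<And>j x. j < m \<Longrightarrow> 0 \<le> fD j x"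
    and gS_nonneg: "\<And>j w. j < m \<Longrightarrow> w \<in> space M \<Longrightarrow> 0 \<le> gS j w"
    and gD_nonneg: "\<And>j w. j < m \<Longrightarrow> w \<in> space M \<Longrightarrow> 0 \<le> gD j w"
    and mu: "\<And>j. j < m \<Longrightarrow> 0 < mu j \<and> mu j < 1"
    and k: "k < m"
  shows "(\<integral>w. (if selected_tx m gS gD mu k w then log 2 (1 + gD k w) else 0) \<partial>M) =
         (LBINT x:{0..}. log 2 (1 + x) * f_GammaD m fS (\<lambda>j. rv_cdf M (gS j)) fD (\<lambda>j. rv_cdf M (gD j)) mu k x)"
proof -
  define X where "X = case_sum gS gD"
  define J where "J = ({..<m} <+> {..<m}) - {Inr k}"
  \<comment> \<open>The indicator only makes h nonnegative: gD k itself is nonnegative.\<close>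
  define h where "h x = indicator {0..} x * log 2 (1 + x)" for x :: real
  define \<Phi> where "\<Phi> x = h x * (\<Prod>i\<in>J. rv_cdf M (X i) (selection_threshold mu k i x))" for x
  have X_dens: "distributed M lborel (X i) (case_sum (\<lambda>j x. ennreal (fS j x)) (\<lambda>j x. ennreal (fD j x)) i)"
    if "i \<in> {..<m} <+> {..<m}" for i
    using that distS distD by (auto simp: X_def)
  have X_meas: "X i \<in> borel_measurable M" if "i \<in> {..<m} <+> {..<m}" for i
    using distributed_measurable[OF X_dens[OF that]] by simp
  have \<theta>_meas: "selection_threshold mu k i \<in> borel_measurable borel" for i
    unfolding selection_threshold_def by measurable
  have h_meas: "h \<in> borel_measurable borel"
    unfolding h_def by measurable
  have h_nonneg: "0 \<le> h x" for x
    by (simp add: h_def indicator_def)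
  have \<Phi>_meas: "\<Phi> \<in> borel_measurable borel"
    unfolding \<Phi>_def using X_meas
    by (intro borel_measurable_times h_meas borel_measurable_prod
              measurable_compose[OF \<theta>_meas borel_measurable_rv_cdf]) (auto simp: J_def)
  have sel: "(if selected_tx m gS gD mu k w then log 2 (1 + gD k w) else 0) =
             h (X (Inr k) w) * (\<Prod>i\<in>J. indicator {..<selection_threshold mu k i (X (Inr k) w)} (X i w))"
    if w: "w \<in> space M" for w
  proof -
    have "0 \<le> gS j w" "0 \<le> gD j w" if "j < m" for j
      using that w gS_nonneg gD_nonneg by auto
    from selected_tx_rate_eq_prod_indicator[of k m mu gS w gD, OF k mu this] show ?thesis
      by (simp add: h_def X_def J_def)
  qed
  have "(\<integral>w. (if selected_tx m gS gD mu k w then log 2 (1 + gD k w) else 0) \<partial>M) =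
        (\<integral>w. h (X (Inr k) w) * (\<Prod>i\<in>J. indicator {..<selection_threshold mu k i (X (Inr k) w)} (X i w)) \<partial>M)"
    by (rule Bochner_Integration.integral_cong[OF refl sel])
  also have "\<dots> = (\<integral>w. h (X (Inr k) w) *
                       (\<Prod>i\<in>J. rv_cdf M (X i) (selection_threshold mu k i (X (Inr k) w))) \<partial>M)"
    unfolding J_def using k
    by (intro integral_indep_vars_below_thresholds[OF _ _ indep[folded X_def] X_dens h_meas h_nonneg
                                                       \<theta>_meas]) auto
  also have "\<dots> = (\<integral>w. \<Phi> (gD k w) \<partial>M)"
    by (simp add: \<Phi>_def X_def)
  also have "\<dots> = (\<integral>x. fD k x * \<Phi> x \<partial>lborel)"
    using distributed_integral[OF distD[OF k], of \<Phi>] \<Phi>_meas fD_nonneg[OF k] by simp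
  also have "\<dots> = (LBINT x:{0..}. log 2 (1 + x) *
                       f_GammaD m fS (\<lambda>j. rv_cdf M (gS j)) fD (\<lambda>j. rv_cdf M (gD j)) mu k x)"
  proof -
    have "case_sum (\<lambda>j. rv_cdf M (gS j)) (\<lambda>j. rv_cdf M (gD j)) i = rv_cdf M (X i)" for i
      by (cases i) (simp_all add: X_def)
    then show ?thesis
      by (simp add: set_lebesgue_integral_def f_GammaD_eq_prod_thresholds[OF k] \<Phi>_def h_def J_def
                    mult_ac)
  qed
  finally show ?thesis .
qed

lemma rv_cdf_eq_if_same_density:
  assumes "distributed M lborel X f" and "distributed M lborel Y f"
  shows "rv_cdf M X = rv_cdf M Y"
proof -
  have "rv_cdf M Z = (\<lambda>x. measure (density lborel f) {..x})" if "distributed M lborel Z f" for Z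
    using distributed_measurable[OF that] distributed_distr_eq_density[OF that, symmetric]
    by (auto simp: rv_cdf_def measure_distr vimage_def Int_def conj_commute)
  with assms show ?thesis by simp
qed

lemma f_GammaD_iid:
  assumes k: "k < m" and x: "0 \<le> x"
    and iid: "\<And>j. j < m \<Longrightarrow> FS j = F \<and> FD j = F \<and> mu j = 1 / 2"
  shows "f_GammaD m fS FS fD FD mu k x = fD k x * F x ^ (2 * m - 1)"
proof -
  have FS: "FS j = F" and FD: "FD j = F" and mu: "mu j = 1 / 2" if "j < m" for j
    using iid[OF that] by auto
  have "(\<Prod>j\<in>{..<m} - {k}. FS j ((1 + x) powr ((1 - mu k) / mu j) - 1) *
                                FD j ((1 + x) powr ((1 - mu k) / (1 - mu j)) - 1)) =
        (\<Prod>j\<in>{..<m} - {k}. F x * F x)"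
    using k x by (intro prod.cong refl) (simp add: FS FD mu)
  then have "f_GammaD m fS FS fD FD mu k x = fD k x * (F x * (F x * F x) ^ (m - 1))"
    using k x unfolding f_GammaD_def by (simp add: FS mu mult.assoc)
  also have "(F x * F x) ^ (m - 1) = F x ^ (2 * (m - 1))"
    by (simp add: power_mult power2_eq_square)
  also have "F x * F x ^ (2 * (m - 1)) = F x ^ (2 * m - 1)"
  proof -
    have "2 * m - 1 = Suc (2 * (m - 1))"
      using k by simp
    then show ?thesis
      by (simp only: power_Suc)
  qed
  finally show ?thesis .
qed

lemma f_GammaD_rv_cdf_iid:
  assumes distS: "\<And>j. j < m \<Longrightarrow> distributed M lborel (gS j) (\<lambda>x. ennreal (fS j x))"
    and distD: "\<And>j. j < m \<Longrightarrow> distributed M lborel (gD j) (\<lambda>x. ennreal (fD j x))"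
    and k: "k < m" and x: "0 \<le> x"
    and iid: "\<forall>j<m. fS j = f \<and> fD j = f \<and> mu j = 1 / 2"
  shows "f_GammaD m fS (\<lambda>j. rv_cdf M (gS j)) fD (\<lambda>j. rv_cdf M (gD j)) mu k x =
         f x * rv_cdf M (gD 0) x ^ (2 * m - 1)"
proof -
  have dist_f: "distributed M lborel (gS j) (\<lambda>x. ennreal (f x))"
               "distributed M lborel (gD j) (\<lambda>x. ennreal (f x))" if "j < m" for j
    using distS[OF that] distD[OF that] iid that by auto
  define F where "F = rv_cdf M (gD 0)"
  have "rv_cdf M (gS j) = F \<and> rv_cdf M (gD j) = F \<and> mu j = 1 / 2" if "j < m" for j
    using rv_cdf_eq_if_same_density[OF dist_f(1)[OF that] dist_f(2)[of 0]]
          rv_cdf_eq_if_same_density[OF dist_f(2)[OF that] dist_f(2)[of 0]] iid that k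
    by (auto simp: F_def)
  from f_GammaD_iid[OF k x this] show ?thesis
    using iid k by (simp add: F_def)
qed

theorem lemma3:
  fixes M :: "'a measure" and m :: nat
    and gS gD :: "nat \<Rightarrow> 'a \<Rightarrow> real"
    and fS fD :: "nat \<Rightarrow> real \<Rightarrow> real"
    and mu :: "nat \<Rightarrow> real"
  assumes P: "prob_space M"
    and m_pos: "m \<ge> 1"
    and indep: "prob_space.indep_vars M (\<lambda>_. borel)
                  (\<lambda>i. case i of Inl k \<Rightarrow> gS k | Inr k \<Rightarrow> gD k)
                  (Inl ` {..<m} \<union> Inr ` {..<m})"
    and distS: "\<And>k. k < m \<Longrightarrow> distributed M lborel (gS k) (\<lambda>x. ennreal (fS k x))"
    and distD: "\<And>k. k < m \<Longrightarrow> distributed M lborel (gD k) (\<lambda>x. ennreal (fD k x))"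
    and fS_nonneg: "\<And>k x. k < m \<Longrightarrow> fS k x \<ge> 0"
    and fD_nonneg: "\<And>k x. k < m \<Longrightarrow> fD k x \<ge> 0"
    and gS_nonneg: "\<And>k w. k < m \<Longrightarrow> w \<in> space M \<Longrightarrow> gS k w \<ge> 0"
    and gD_nonneg: "\<And>k w. k < m \<Longrightarrow> w \<in> space M \<Longrightarrow> gD k w \<ge> 0"
    and intS: "\<And>k. k < m \<Longrightarrow> integrable M (\<lambda>w. log 2 (1 + gS k w))"
    and intD: "\<And>k. k < m \<Longrightarrow> integrable M (\<lambda>w. log 2 (1 + gD k w))"
    and mu_range: "\<And>k. k < m \<Longrightarrow> 0 < mu k \<and> mu k < 1"
    and balance: "\<And>k. k < m \<Longrightarrow>
        (LBINT x:{0..}. log 2 (1 + x) *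
            f_GammaS m fS (\<lambda>j. rv_cdf M (gS j)) fD (\<lambda>j. rv_cdf M (gD j)) mu k x) =
        (LBINT x:{0..}. log 2 (1 + x) *
            f_GammaD m fS (\<lambda>j. rv_cdf M (gS j)) fD (\<lambda>j. rv_cdf M (gD j)) mu k x)"
  shows "avg_rate_SD M m gS gD mu =
           (\<Sum>k<m. LBINT x:{0..}. log 2 (1 + x) *
              f_GammaD m fS (\<lambda>j. rv_cdf M (gS j)) fD (\<lambda>j. rv_cdf M (gD j)) mu k x)
         \<and> (\<forall>f. (\<forall>k<m. fS k = f \<and> fD k = f \<and> mu k = 1 / 2) \<longrightarrow>
              avg_rate_SD M m gS gD mu =
                real m * (LBINT x:{0..}. log 2 (1 + x) * f x *
                                         (rv_cdf M (gD 0) x) ^ (2 * m - 1)))"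
proof -
  interpret prob_space M by (rule P)
  have rate: "avg_rate_SD M m gS gD mu =
      (\<Sum>k<m. LBINT x:{0..}. log 2 (1 + x) *
         f_GammaD m fS (\<lambda>j. rv_cdf M (gS j)) fD (\<lambda>j. rv_cdf M (gD j)) mu k x)"
    unfolding avg_rate_SD_def using indep
    by (intro sum.cong refl integral_selected_tx distS distD fD_nonneg gS_nonneg gD_nonneg mu_range)
       (simp_all add: Plus_def)
  moreover have "avg_rate_SD M m gS gD mu =
      real m * (LBINT x:{0..}. log 2 (1 + x) * f x * (rv_cdf M (gD 0) x) ^ (2 * m - 1))"
    if iid: "\<forall>k<m. fS k = f \<and> fD k = f \<and> mu k = 1 / 2" for f
  proof -
    have "(LBINT x:{0..}. log 2 (1 + x) *
             f_GammaD m fS (\<lambda>j. rv_cdf M (gS j)) fD (\<lambda>j. rv_cdf M (gD j)) mu k x) =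
          (LBINT x:{0..}. log 2 (1 + x) * f x * (rv_cdf M (gD 0) x) ^ (2 * m - 1))" if "k < m" for k
      using f_GammaD_rv_cdf_iid[OF distS distD that _ iid]
      by (intro set_lebesgue_integral_cong) (auto simp: mult.assoc)
    then show ?thesis
      unfolding rate by simp
  qed
  ultimately show ?thesis
    by blast
qed

end
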